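(* Let $G=(V,D,B)$ be a mixed graph, $v\in V$, and $Y\subseteq V\setminus(\{v\}\cup\mathrm{sib}(v))$ with $|Y|=|\mathrm{pa}(v)|=n$. Write $Y=\{y_1,\dots,y_n\}$, $\mathrm{pa}(v)=\{p_1,\dots,p_n\}$, and for $(\Lambda,\Omega)\in\Theta$ with $\Sigma=\phi_G(\Lambda,\Omega)$ define the $n\times n$ matrix $\mathbf{A}$ by $\mathbf{A}_{ij}=[(I-\Lambda)^T\Sigma]_{y_ip_j}$ if $y_i\in\mathrm{htr}(v)$ and $\mathbf{A}_{ij}=\Sigma_{y_ip_j}$ if $y_i\notin\mathrm{htr}(v)$. If $Y$ satisfies the half-trek criterion with respect to $v$, then $\mathbf{A}$ is generically invertible, i.e. $\det\mathbf{A}$, as a function of $(\Lambda,\Omega)\in\Theta$, is nonzero outside a proper algebraic subset of $\Theta$.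
   Context: A mixed graph is $G=(V,D,B)$ with $V=[m]$, $D$ directed edges $v\to w$, $B$ symmetric bidirected edges $v\leftrightarrow w$, no self-loops. $\mathrm{pa}(v)=\{w:w\to v\in D\}$, $\mathrm{sib}(v)=\{w:w\leftrightarrow v\in B\}$. $\mathbb{R}^D_{\mathrm{reg}}$: real $m\times m$ $\Lambda$ with $\lambda_{vw}=0$ for $v\to w\notin D$ and $I-\Lambda$ invertible; $\mathrm{PD}(B)$: positive definite symmetric $\Omega$ with $\omega_{vw}=0$ for $v\ne w$, $v\leftrightarrow w\notin B$; $\Theta=\mathbb{R}^D_{\mathrm{reg}}\times\mathrm{PD}(B)$; $\phi_G(\Lambda,\Omega)=(I-\Lambda)^{-T}\Omega(I-\Lambda)^{-1}$. A proper algebraic subset of $\Theta$ is the zero set in $\Theta$ of polynomials in the entries, not all of $\Theta$. A half-trek from $y$ to $w$ is a path $y\leftrightarrow w_0\to w_1\to\cdots\to w_r=w$ (left side $\{y\}$, right side $\{w_0,\dots,w_r\}$) or $y\to w_1\to\cdots\to w_r=w$, $r\ge0$ (left side $\{y\}$, right side $\{y,w_1,\dots,w_r\}$); nodes may repeat. $\mathrm{htr}(v)$ is the set of $w\in V\setminus(\{v\}\cup\mathrm{sib}(v))$ reachable from $v$ by a half-trek. A system of half-treks from $X$ to $Y$: half-treks with distinct sources forming $X$ and distinct targets forming $Y$; no sided intersection: pairwise disjoint left sides and pairwise disjoint right sides. $Y$ satisfies the half-trek criterion w.r.t. $v$ if $|Y|=|\mathrm{pa}(v)|$, $Y\cap(\{v\}\cup\mathrm{sib}(v))=\emptyset$,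 and there is a system of half-treks with no sided intersection from $Y$ to $\mathrm{pa}(v)$. *)

theory Defs
  imports "Jordan_Normal_Form.Determinant"
begin

text \<open>Mixed graph on vertex set V = {0..<m}: directed edges D (pairs (v,w) meaning v \<rightarrow> w),
bidirected edges B (symmetric).\<close>

definition mixed_graph :: "nat \<Rightarrow> (nat \<times> nat) set \<Rightarrow> (nat \<times> nat) set \<Rightarrow> bool" where
  "mixed_graph m D B \<longleftrightarrow>
     D \<subseteq> {0..<m} \<times> {0..<m} \<and> B \<subseteq> {0..<m} \<times> {0..<m} \<and>
     (\<forall>v. (v, v) \<notin> D) \<and> (\<forall>v. (v, v) \<notin> B) \<and> (\<forall>v w. (v, w) \<in> B \<longrightarrow> (w, v) \<in> B)"

definition pa :: "(nat \<times> nat) set \<Rightarrow> nat \<Rightarrow> nat set" where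
  "pa D v = {w. (w, v) \<in> D}"

definition sib :: "(nat \<times> nat) set \<Rightarrow> nat \<Rightarrow> nat set" where
  "sib B v = {w. (w, v) \<in> B}"

definition directed_walk :: "(nat \<times> nat) set \<Rightarrow> nat list \<Rightarrow> bool" where
  "directed_walk D ws \<longleftrightarrow> ws \<noteq> [] \<and> (\<forall>i. Suc i < length ws \<longrightarrow> (ws ! i, ws ! Suc i) \<in> D)"

text \<open>A half-trek from y to w, encoded by its source y and the list ws of its right-side nodes:
either y \<leftrightarrow> w0 \<rightarrow> ... \<rightarrow> wr = w with ws = [w0,...,wr], or y \<rightarrow> w1 \<rightarrow> ... \<rightarrow> wr = w with
ws = [y,w1,...,wr]. Left side is {y}, right side is set ws.\<close>
definition half_trek :: "(nat \<times> nat) set \<Rightarrow> (nat \<times> nat) set \<Rightarrow> nat \<Rightarrow> nat list \<Rightarrow> nat \<Rightarrow> bool" where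
  "half_trek D B y ws w \<longleftrightarrow>
     directed_walk D ws \<and> last ws = w \<and> ((y, hd ws) \<in> B \<or> hd ws = y)"

definition htr :: "nat \<Rightarrow> (nat \<times> nat) set \<Rightarrow> (nat \<times> nat) set \<Rightarrow> nat \<Rightarrow> nat set" where
  "htr m D B v = {w \<in> {0..<m}. w \<notin> {v} \<union> sib B v \<and> (\<exists>ws. half_trek D B v ws w)}"

text \<open>System of half-treks with no sided intersection from X to Z: a bijection \<sigma> : X \<rightarrow> Z
(source to target) and for each source x a half-trek (right side list \<pi> x) from x to \<sigma> x;
left sides {x} are pairwise disjoint since sources are distinct, and right sides are pairwise disjoint.\<close>
definition system_no_sided_intersection ::
  "(nat \<times> nat) set \<Rightarrow> (nat \<times> nat) set \<Rightarrow> nat set \<Rightarrow> nat set \<Rightarrow> bool" where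
  "system_no_sided_intersection D B X Z \<longleftrightarrow>
     (\<exists>\<sigma> \<pi>. bij_betw \<sigma> X Z \<and> (\<forall>x\<in>X. half_trek D B x (\<pi> x) (\<sigma> x)) \<and>
        (\<forall>x1\<in>X. \<forall>x2\<in>X. x1 \<noteq> x2 \<longrightarrow> set (\<pi> x1) \<inter> set (\<pi> x2) = {}))"

definition HTC :: "(nat \<times> nat) set \<Rightarrow> (nat \<times> nat) set \<Rightarrow> nat \<Rightarrow> nat set \<Rightarrow> bool" where
  "HTC D B v Y \<longleftrightarrow> card Y = card (pa D v) \<and> Y \<inter> ({v} \<union> sib B v) = {} \<and>
     system_no_sided_intersection D B Y (pa D v)"

definition pos_def_mat :: "real mat \<Rightarrow> bool" where
  "pos_def_mat A \<longleftrightarrow> (\<forall>x \<in> carrier_vec (dim_row A). x \<noteq> 0\<^sub>v (dim_row A) \<longrightarrow> x \<bullet> (A *\<^sub>v x) > 0)"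

definition Theta :: "nat \<Rightarrow> (nat \<times> nat) set \<Rightarrow> (nat \<times> nat) set \<Rightarrow> (real mat \<times> real mat) set" where
  "Theta m D B = {(\<Lambda>, \<Omega>).
     \<Lambda> \<in> carrier_mat m m \<and> (\<forall>i<m. \<forall>j<m. (i, j) \<notin> D \<longrightarrow> \<Lambda> $$ (i, j) = 0) \<and>
     invertible_mat (1\<^sub>m m - \<Lambda>) \<and>
     \<Omega> \<in> carrier_mat m m \<and> \<Omega>\<^sup>T = \<Omega> \<and> pos_def_mat \<Omega> \<and>
     (\<forall>i<m. \<forall>j<m. i \<noteq> j \<and> (i, j) \<notin> B \<longrightarrow> \<Omega> $$ (i, j) = 0)}"

definition mat_inv :: "nat \<Rightarrow> real mat \<Rightarrow> real mat" where
  "mat_inv m A = (THE C. C \<in> carrier_mat m m \<and> A * C = 1\<^sub>m m \<and> C * A = 1\<^sub>m m)"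

definition phi :: "nat \<Rightarrow> real mat \<Rightarrow> real mat \<Rightarrow> real mat" where
  "phi m \<Lambda> \<Omega> = (mat_inv m (1\<^sub>m m - \<Lambda>))\<^sup>T * \<Omega> * mat_inv m (1\<^sub>m m - \<Lambda>)"

inductive poly_fun :: "nat \<Rightarrow> (real mat \<times> real mat \<Rightarrow> real) \<Rightarrow> bool" for m where
  const: "poly_fun m (\<lambda>_. c)"
| lam: "i < m \<Longrightarrow> j < m \<Longrightarrow> poly_fun m (\<lambda>(\<Lambda>, \<Omega>). \<Lambda> $$ (i, j))"
| om: "i < m \<Longrightarrow> j < m \<Longrightarrow> poly_fun m (\<lambda>(\<Lambda>, \<Omega>). \<Omega> $$ (i, j))"
| add: "poly_fun m f \<Longrightarrow> poly_fun m g \<Longrightarrow> poly_fun m (\<lambda>x. f x + g x)"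
| mult: "poly_fun m f \<Longrightarrow> poly_fun m g \<Longrightarrow> poly_fun m (\<lambda>x. f x * g x)"

definition proper_algebraic_subset :: "nat \<Rightarrow> (nat \<times> nat) set \<Rightarrow> (nat \<times> nat) set \<Rightarrow> (real mat \<times> real mat) set \<Rightarrow> bool" where
  "proper_algebraic_subset m D B S \<longleftrightarrow>
     (\<exists>F. (\<forall>f\<in>F. poly_fun m f) \<and> S = {\<theta> \<in> Theta m D B. \<forall>f\<in>F. f \<theta> = 0} \<and> S \<noteq> Theta m D B)"

text \<open>The matrix A of the statement, for enumerations y of Y and p of pa(v) (indices 0..<n).\<close>
definition matA :: "nat \<Rightarrow> (nat \<times> nat) set \<Rightarrow> (nat \<times> nat) set \<Rightarrow> nat \<Rightarrow> nat \<Rightarrow> (nat \<Rightarrow> nat) \<Rightarrow> (nat \<Rightarrow> nat)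
    \<Rightarrow> real mat \<Rightarrow> real mat \<Rightarrow> real mat" where
  "matA m D B v n y p \<Lambda> \<Omega> =
     (let \<Sigma> = phi m \<Lambda> \<Omega> in
      mat n n (\<lambda>(i, j). if y i \<in> htr m D B v then ((1\<^sub>m m - \<Lambda>)\<^sup>T * \<Sigma>) $$ (y i, p j)
                        else \<Sigma> $$ (y i, p j)))"

end

theory Submission
  imports Defs
begin

(* Clearing the denominators of (I - Lambda)^-1 = adj (I - Lambda) / det (I - Lambda) turns det A into
   a polynomial in the parameters with the same zero set in Theta, so it suffices to find one point of
   Theta where det A does not vanish.

   Take a system of half-treks from Y to pa(v) without sided intersection and of minimal cost, give
   weight 1 to its directed edges and a small positive weight to the bidirected edges that start its
   treks. Then all entries of A are nonnegative, A(y, sigma y) > 0 for the matching sigma of the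
   system, and a nonzero entry A(a, sigma w) with a <> w yields a chain of dependencies from a to w,
   each step saying that one source lies on the trek of another or comes after it on some trek. By
   minimality these dependencies are acyclic: along a cycle every source could take over the tail of
   the next trek starting at itself, which is strictly cheaper. Hence the matching sigma is the only
   permutation contributing to det A. *)

section \<open>Polynomial functions of the parameters\<close>

lemma poly_fun_sum:
  assumes "finite I" and "\<And>i. i \<in> I \<Longrightarrow> poly_fun m (f i)"
  shows "poly_fun m (\<lambda>\<theta>. \<Sum>i\<in>I. f i \<theta>)"
  using assms by (induction I rule: finite_induct) (auto intro: poly_fun.intros)

lemma poly_fun_prod:
  assumes "finite I" and "\<And>i. i \<in> I \<Longrightarrow> poly_fun m (f i)"
  shows "poly_fun m (\<lambda>\<theta>. \<Prod>i\<in>I. f i \<theta>)"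
  using assms by (induction I rule: finite_induct) (auto intro: poly_fun.intros)

lemma poly_fun_diff:
  assumes "poly_fun m f" and "poly_fun m g"
  shows "poly_fun m (\<lambda>\<theta>. f \<theta> - g \<theta>)"
proof -
  have "poly_fun m (\<lambda>\<theta>. f \<theta> + (- 1) * g \<theta>)"
    using assms by (intro poly_fun.intros)
  then show ?thesis by simp
qed

definition poly_mat :: "nat \<Rightarrow> nat \<Rightarrow> nat \<Rightarrow> (real mat \<times> real mat \<Rightarrow> real mat) \<Rightarrow> bool" where
  "poly_mat m k l M \<longleftrightarrow>
     (\<forall>\<theta>. M \<theta> \<in> carrier_mat k l) \<and> (\<forall>i<k. \<forall>j<l. poly_fun m (\<lambda>\<theta>. M \<theta> $$ (i, j)))"

lemma poly_matI:
  assumes "\<And>\<theta>. M \<theta> \<in> carrier_mat k l"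
    and "\<And>i j. i < k \<Longrightarrow> j < l \<Longrightarrow> poly_fun m (\<lambda>\<theta>. M \<theta> $$ (i, j))"
  shows "poly_mat m k l M"
  using assms unfolding poly_mat_def by blast

lemma poly_matD:
  assumes "poly_mat m k l M"
  shows "M \<theta> \<in> carrier_mat k l"
    and "i < k \<Longrightarrow> j < l \<Longrightarrow> poly_fun m (\<lambda>\<theta>. M \<theta> $$ (i, j))"
  using assms unfolding poly_mat_def by blast+

lemma poly_mat_mat:
  assumes "\<And>i j. i < k \<Longrightarrow> j < l \<Longrightarrow> poly_fun m (\<lambda>\<theta>. g \<theta> (i, j))"
  shows "poly_mat m k l (\<lambda>\<theta>. mat k l (g \<theta>))"
  using assms by (intro poly_matI) auto

lemma poly_mat_mult:
  assumes M: "poly_mat m k l M" and N: "poly_mat m l r N"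
  shows "poly_mat m k r (\<lambda>\<theta>. M \<theta> * N \<theta>)"
proof (rule poly_matI)
  show "M \<theta> * N \<theta> \<in> carrier_mat k r" for \<theta>
    using poly_matD(1)[OF M] poly_matD(1)[OF N] by (rule mult_carrier_mat)
  fix i j assume ij: "i < k" "j < r"
  have "(M \<theta> * N \<theta>) $$ (i, j) = (\<Sum>c\<in>{0..<l}. M \<theta> $$ (i, c) * N \<theta> $$ (c, j))" for \<theta>
    using ij poly_matD(1)[OF M, of \<theta>] poly_matD(1)[OF N, of \<theta>] by (auto simp: scalar_prod_def)
  then show "poly_fun m (\<lambda>\<theta>. (M \<theta> * N \<theta>) $$ (i, j))"
    using ij poly_matD(2)[OF M] poly_matD(2)[OF N] by (auto intro!: poly_fun_sum poly_fun.mult)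
qed

lemma poly_mat_transpose:
  assumes "poly_mat m k l M"
  shows "poly_mat m l k (\<lambda>\<theta>. (M \<theta>)\<^sup>T)"
proof (rule poly_matI)
  fix i j assume "i < l" "j < k"
  moreover have "(M \<theta>)\<^sup>T $$ (i, j) = M \<theta> $$ (j, i)" if "i < l" "j < k" for \<theta>
    using that poly_matD(1)[OF assms, of \<theta>] by auto
  ultimately show "poly_fun m (\<lambda>\<theta>. (M \<theta>)\<^sup>T $$ (i, j))"
    using poly_matD(2)[OF assms] by simp
qed (use poly_matD(1)[OF assms] in auto)

lemma poly_mat_det:
  assumes M: "poly_mat m k k M"
  shows "poly_fun m (\<lambda>\<theta>. det (M \<theta>))"
proof -
  have "det (M \<theta>) = (\<Sum>q\<in>{q. q permutes {0..<k}}. signof q * (\<Prod>i\<in>{0..<k}. M \<theta> $$ (i, q i)))" for \<theta>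
    using det_def'[OF poly_matD(1)[OF M]] .
  moreover have "poly_fun m (\<lambda>\<theta>. M \<theta> $$ (i, q i))" if "q permutes {0..<k}" "i \<in> {0..<k}" for q i
    using that poly_matD(2)[OF M] permutes_in_image by fastforce
  ultimately show ?thesis
    by (simp only:) (auto intro!: poly_fun_sum poly_fun_prod poly_fun.mult poly_fun.const
        simp: finite_permutations)
qed

lemma poly_mat_adj:
  assumes M: "poly_mat m k k M"
  shows "poly_mat m k k (\<lambda>\<theta>. adj_mat (M \<theta>))"
proof (rule poly_matI)
  show "adj_mat (M \<theta>) \<in> carrier_mat k k" for \<theta>
    using adj_mat(1)[OF poly_matD(1)[OF M]] .
  fix i j assume ij: "i < k" "j < k"
  have "poly_mat m (k - 1) (k - 1) (\<lambda>\<theta>. mat_delete (M \<theta>) j i)"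
  proof (rule poly_matI)
    show "mat_delete (M \<theta>) j i \<in> carrier_mat (k - 1) (k - 1)" for \<theta>
      using mat_delete_carrier[OF poly_matD(1)[OF M]] .
    fix a b assume "a < k - 1" "b < k - 1"
    then have "mat_delete (M \<theta>) j i $$ (a, b) = M \<theta> $$ (insert_index j a, insert_index i b)" for \<theta>
      using ij poly_matD(1)[OF M, of \<theta>] by (simp add: mat_delete_def insert_index_def)
    moreover have "insert_index j a < k" "insert_index i b < k"
      using \<open>a < k - 1\<close> \<open>b < k - 1\<close> by (auto simp: insert_index_def)
    ultimately show "poly_fun m (\<lambda>\<theta>. mat_delete (M \<theta>) j i $$ (a, b))"
      using poly_matD(2)[OF M] by simp
  qed
  then have "poly_fun m (\<lambda>\<theta>. (- 1) ^ (j + i) * det (mat_delete (M \<theta>) j i))"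
    by (intro poly_fun.mult poly_fun.const poly_mat_det)
  moreover have "adj_mat (M \<theta>) $$ (i, j) = (- 1) ^ (j + i) * det (mat_delete (M \<theta>) j i)" for \<theta>
    using ij poly_matD(1)[OF M, of \<theta>] by (simp add: adj_mat_def cofactor_def)
  ultimately show "poly_fun m (\<lambda>\<theta>. adj_mat (M \<theta>) $$ (i, j))" by simp
qed

lemma poly_mat_smult:
  assumes "poly_fun m c" and "poly_mat m k l M"
  shows "poly_mat m k l (\<lambda>\<theta>. c \<theta> \<cdot>\<^sub>m M \<theta>)"
proof (rule poly_matI)
  fix i j assume "i < k" "j < l"
  moreover have "(c \<theta> \<cdot>\<^sub>m M \<theta>) $$ (i, j) = c \<theta> * M \<theta> $$ (i, j)" if "i < k" "j < l" for \<theta>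
    using that poly_matD(1)[OF assms(2), of \<theta>] by auto
  ultimately show "poly_fun m (\<lambda>\<theta>. (c \<theta> \<cdot>\<^sub>m M \<theta>) $$ (i, j))"
    using assms(1) poly_matD(2)[OF assms(2)] by (simp add: poly_fun.mult)
qed (use poly_matD(1)[OF assms(2)] in auto)

text \<open>Versions of \<open>I - \<Lambda>\<close> and \<open>\<Omega>\<close> that are \<open>m \<times> m\<close> matrices for every pair \<open>\<theta>\<close>, not only on \<open>Theta\<close>,
  so that their entries are polynomial functions everywhere.\<close>
definition I_minus_Lambda :: "nat \<Rightarrow> real mat \<times> real mat \<Rightarrow> real mat" where
  "I_minus_Lambda m \<theta> = mat m m (\<lambda>(i, j). (if i = j then 1 else 0) - fst \<theta> $$ (i, j))"

definition Omega :: "nat \<Rightarrow> real mat \<times> real mat \<Rightarrow> real mat" where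
  "Omega m \<theta> = mat m m (\<lambda>(i, j). snd \<theta> $$ (i, j))"

lemma poly_mat_I_minus_Lambda: "poly_mat m m m (I_minus_Lambda m)"
  unfolding I_minus_Lambda_def
proof (rule poly_mat_mat, unfold prod.case)
  fix i j assume "i < m" "j < m"
  then have "poly_fun m (\<lambda>(\<Lambda>, \<Omega>). \<Lambda> $$ (i, j))" by (rule poly_fun.lam)
  then show "poly_fun m (\<lambda>\<theta>. (if i = j then 1 else 0) - fst \<theta> $$ (i, j))"
    by (intro poly_fun_diff poly_fun.const) (simp add: case_prod_beta')
qed

lemma poly_mat_Omega: "poly_mat m m m (Omega m)"
  unfolding Omega_def
proof (rule poly_mat_mat, unfold prod.case)
  fix i j assume "i < m" "j < m"
  then have "poly_fun m (\<lambda>(\<Lambda>, \<Omega>). \<Omega> $$ (i, j))" by (rule poly_fun.om)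
  then show "poly_fun m (\<lambda>\<theta>. snd \<theta> $$ (i, j))" by (simp add: case_prod_beta')
qed

section \<open>Matrix facts\<close>

lemma mat_inv_eqI:
  fixes A C :: "real mat"
  assumes A: "A \<in> carrier_mat m m" and C: "C \<in> carrier_mat m m" and AC: "A * C = 1\<^sub>m m"
  shows "mat_inv m A = C"
  unfolding mat_inv_def
proof (rule the_equality)
  have CA: "C * A = 1\<^sub>m m" using mat_mult_left_right_inverse[OF A C AC] .
  then show "C \<in> carrier_mat m m \<and> A * C = 1\<^sub>m m \<and> C * A = 1\<^sub>m m" using C AC by simp
  fix C' assume C': "C' \<in> carrier_mat m m \<and> A * C' = 1\<^sub>m m \<and> C' * A = 1\<^sub>m m"
  have "C' = (C * A) * C'" using C' CA left_mult_one_mat[of C' m m] by simp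
  also have "\<dots> = C * (A * C')" using A C C' by (meson assoc_mult_mat)
  finally show "C' = C" using C C' by simp
qed

lemma det_nonzero_if_invertible:
  fixes A :: "real mat"
  assumes A: "A \<in> carrier_mat m m" and inv: "invertible_mat A"
  shows "det A \<noteq> 0"
proof -
  obtain C where AC: "A * C = 1\<^sub>m m" and CA: "C * A = 1\<^sub>m (dim_row C)"
    using inv A unfolding invertible_mat_def inverts_mat_def by auto
  then have C: "C \<in> carrier_mat m m"
    using A by (metis carrier_matD carrier_matI index_mult_mat(3) index_one_mat(3))
  have "det A * det C = 1" using det_mult[OF A C] AC by simp
  then show ?thesis by auto
qed

lemma mat_inv_adj:
  fixes A :: "real mat"
  assumes A: "A \<in> carrier_mat m m" and d: "det A \<noteq> 0"
  shows "mat_inv m A = (1 / det A) \<cdot>\<^sub>m adj_mat A"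
proof (rule mat_inv_eqI[OF A])
  show "(1 / det A) \<cdot>\<^sub>m adj_mat A \<in> carrier_mat m m" using adj_mat(1)[OF A] by simp
  have "A * ((1 / det A) \<cdot>\<^sub>m adj_mat A) = (1 / det A) \<cdot>\<^sub>m (det A \<cdot>\<^sub>m 1\<^sub>m m)"
    using mult_smult_distrib[OF A adj_mat(1)[OF A]] adj_mat(2)[OF A] by simp
  also have "\<dots> = 1\<^sub>m m" using d by (intro eq_matI) auto
  finally show "A * ((1 / det A) \<cdot>\<^sub>m adj_mat A) = 1\<^sub>m m" .
qed

lemma quadratic_form_near_identity:
  fixes W :: "real mat"
  assumes W: "W \<in> carrier_mat m m" and diag: "\<And>i. i < m \<Longrightarrow> W $$ (i, i) = 1"
    and off: "\<And>i j. i < m \<Longrightarrow> j < m \<Longrightarrow> i \<noteq> j \<Longrightarrow> \<bar>W $$ (i, j)\<bar> \<le> e"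
    and e: "0 \<le> e" and x: "x \<in> carrier_vec m"
  shows "(1 - real m * e) * (\<Sum>i<m. (x $ i)\<^sup>2) \<le> x \<bullet> (W *\<^sub>v x)"
proof -
  define S where "S = (\<Sum>i<m. (x $ i)\<^sup>2)"
  \<comment> \<open>\<open>2 |ab| \<le> a\<^sup>2 + b\<^sup>2\<close> bounds every off-diagonal term\<close>
  have entry_bound: "x $ i * (W $$ (i, j) * x $ j)
      \<ge> (if i = j then (x $ i)\<^sup>2 else 0) - e / 2 * (x $ i)\<^sup>2 - e / 2 * (x $ j)\<^sup>2"
    if "i < m" "j < m" for i j
  proof (cases "i = j")
    case False
    have "\<bar>x $ i * x $ j\<bar> \<le> ((x $ i)\<^sup>2 + (x $ j)\<^sup>2) / 2"
      using sum_squares_bound[of "\<bar>x $ i\<bar>" "\<bar>x $ j\<bar>"] by (simp add: abs_mult power2_eq_square)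
    then have "e * \<bar>x $ i * x $ j\<bar> \<le> e * (((x $ i)\<^sup>2 + (x $ j)\<^sup>2) / 2)"
      using e by (rule mult_left_mono)
    moreover have "\<bar>W $$ (i, j)\<bar> * \<bar>x $ i * x $ j\<bar> \<le> e * \<bar>x $ i * x $ j\<bar>"
      using off[OF that False] by (intro mult_right_mono) auto
    moreover have "- (\<bar>W $$ (i, j)\<bar> * \<bar>x $ i * x $ j\<bar>) \<le> x $ i * (W $$ (i, j) * x $ j)"
      by (metis abs_ge_minus_self abs_mult minus_le_iff mult.left_commute)
    ultimately show ?thesis
      using False by (simp add: field_simps)
  qed (use that diag e in \<open>simp add: power2_eq_square\<close>)
  have row: "(\<Sum>j<m. (if i = j then (x $ i)\<^sup>2 else 0) - e / 2 * (x $ i)\<^sup>2 - e / 2 * (x $ j)\<^sup>2)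
      = (x $ i)\<^sup>2 - real m * e / 2 * (x $ i)\<^sup>2 - e / 2 * S" if "i < m" for i
    using that unfolding S_def by (simp add: sum_subtractf sum_distrib_left)
  have "(\<Sum>i<m. (x $ i)\<^sup>2 - real m * e / 2 * (x $ i)\<^sup>2 - e / 2 * S)
      = S - real m * e / 2 * S - real m * (e / 2 * S)"
    by (simp only: sum_subtractf sum_distrib_left[symmetric] S_def) simp
  then have "(1 - real m * e) * S = (\<Sum>i<m. (x $ i)\<^sup>2 - real m * e / 2 * (x $ i)\<^sup>2 - e / 2 * S)"
    by (simp add: algebra_simps)
  also have "\<dots> = (\<Sum>i<m. \<Sum>j<m.
      (if i = j then (x $ i)\<^sup>2 else 0) - e / 2 * (x $ i)\<^sup>2 - e / 2 * (x $ j)\<^sup>2)"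
    using row by simp
  also have "\<dots> \<le> (\<Sum>i<m. \<Sum>j<m. x $ i * (W $$ (i, j) * x $ j))"
    using entry_bound by (intro sum_mono) auto
  also have "\<dots> = x \<bullet> (W *\<^sub>v x)"
    using x W by (simp add: scalar_prod_def sum_distrib_left atLeast0LessThan)
  finally show ?thesis unfolding S_def .
qed

lemma pos_def_mat_near_identity:
  fixes W :: "real mat"
  assumes W: "W \<in> carrier_mat m m" and diag: "\<And>i. i < m \<Longrightarrow> W $$ (i, i) = 1"
    and off: "\<And>i j. i < m \<Longrightarrow> j < m \<Longrightarrow> i \<noteq> j \<Longrightarrow> \<bar>W $$ (i, j)\<bar> \<le> e"
    and e: "0 \<le> e" "real m * e < 1"
  shows "pos_def_mat W"
  unfolding pos_def_mat_def
proof (intro ballI impI)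
  fix x :: "real vec" assume x: "x \<in> carrier_vec (dim_row W)" "x \<noteq> 0\<^sub>v (dim_row W)"
  then have xm: "x \<in> carrier_vec m" using W by auto
  obtain i where i: "i < m" "x $ i \<noteq> 0" using x xm W by (metis carrier_matD(1) carrier_vecD eq_vecI index_zero_vec)
  have "0 < (x $ i)\<^sup>2" using i by simp
  also have "\<dots> \<le> (\<Sum>i<m. (x $ i)\<^sup>2)" using i by (intro member_le_sum) auto
  finally have "0 < (1 - real m * e) * (\<Sum>i<m. (x $ i)\<^sup>2)" using e(2) by simp
  also have "\<dots> \<le> x \<bullet> (W *\<^sub>v x)" by (rule quadratic_form_near_identity[OF W diag off e(1) xm])
  finally show "0 < x \<bullet> (W *\<^sub>v x)" .
qed

lemma congruence_by_inverse:
  fixes A C W :: "real mat"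
  assumes A: "A \<in> carrier_mat m m" and C: "C \<in> carrier_mat m m" and W: "W \<in> carrier_mat m m"
    and CA: "C * A = 1\<^sub>m m"
  shows "A\<^sup>T * (C\<^sup>T * W * C) = W * C"
proof -
  have AT: "A\<^sup>T \<in> carrier_mat m m" and CT: "C\<^sup>T \<in> carrier_mat m m" using A C by auto
  have "A\<^sup>T * (C\<^sup>T * W * C) = A\<^sup>T * (C\<^sup>T * W) * C"
    using assoc_mult_mat[OF AT mult_carrier_mat[OF CT W] C] ..
  also have "A\<^sup>T * (C\<^sup>T * W) = A\<^sup>T * C\<^sup>T * W"
    using assoc_mult_mat[OF AT CT W] ..
  also have "A\<^sup>T * C\<^sup>T = (C * A)\<^sup>T" using transpose_mult[OF C A] ..
  finally show ?thesis using CA W by simp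
qed

definition nonneg_mat :: "real mat \<Rightarrow> bool" where
  "nonneg_mat A \<longleftrightarrow> (\<forall>i<dim_row A. \<forall>j<dim_col A. 0 \<le> A $$ (i, j))"

lemma nonneg_mat_mult:
  assumes "nonneg_mat A" "nonneg_mat B" "dim_col A = dim_row B"
  shows "nonneg_mat (A * B)"
  using assms unfolding nonneg_mat_def by (auto simp: scalar_prod_def intro!: sum_nonneg)

lemma nonneg_mat_transpose: "nonneg_mat A \<Longrightarrow> nonneg_mat A\<^sup>T"
  unfolding nonneg_mat_def by auto

lemma nonneg_mult_mat_entry_ge:
  assumes "nonneg_mat A" "nonneg_mat B" "A \<in> carrier_mat n k" "B \<in> carrier_mat k l"
    and "i < n" "j < l" "c < k"
  shows "A $$ (i, c) * B $$ (c, j) \<le> (A * B) $$ (i, j)"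
  using assms unfolding nonneg_mat_def
  by (auto simp: scalar_prod_def intro!: member_le_sum[of c, simplified])

lemma mult_mat_entry_nonzero:
  fixes A B :: "'a :: {semiring_0, semiring_no_zero_divisors} mat"
  assumes "A \<in> carrier_mat n k" "B \<in> carrier_mat k l" "i < n" "j < l" "(A * B) $$ (i, j) \<noteq> 0"
  obtains c where "c < k" "A $$ (i, c) \<noteq> 0" "B $$ (c, j) \<noteq> 0"
proof -
  have "(\<Sum>c\<in>{0..<k}. A $$ (i, c) * B $$ (c, j)) \<noteq> 0"
    using assms by (simp add: scalar_prod_def)
  then obtain c where "c \<in> {0..<k}" "A $$ (i, c) * B $$ (c, j) \<noteq> 0"
    by (rule sum.not_neutral_contains_not_neutral)
  then show ?thesis using that[of c] by simp
qed

section \<open>Cycles, permutations and determinants\<close>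

lemma finite_invariant_set_has_cycle:
  assumes L: "finite L" "a \<in> L" and s: "\<And>x. x \<in> L \<Longrightarrow> s x \<in> L"
  obtains C where "C \<subseteq> L" "C \<noteq> {}" "bij_betw s C C"
proof -
  have orbit: "(s ^^ k) a \<in> L" for k by (induction k) (use L(2) s in auto)
  have "\<not> inj (\<lambda>k. (s ^^ k) a)"
  proof
    assume inj: "inj (\<lambda>k. (s ^^ k) a)"
    have "range (\<lambda>k. (s ^^ k) a) \<subseteq> L" using orbit by blast
    then have "finite (range (\<lambda>k. (s ^^ k) a))" using L(1) by (rule finite_subset)
    then have "finite (UNIV :: nat set)" using inj by (rule finite_imageD)
    then show False by simp
  qed
  then obtain i j where "i \<noteq> j" "(s ^^ i) a = (s ^^ j) a" unfolding inj_def by blast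
  then obtain i j where ij: "i < j" "(s ^^ i) a = (s ^^ j) a"
    by (cases i j rule: linorder_cases) auto
  define x where "x = (s ^^ i) a"
  define p where "p = j - i - 1"
  have "(s ^^ Suc p) x = (s ^^ (Suc p + i)) a" unfolding x_def by (simp add: funpow_add)
  also have "Suc p + i = j" using ij unfolding p_def by simp
  finally have per: "(s ^^ Suc p) x = x" using ij unfolding x_def by simp
  define C where "C = range (\<lambda>k. (s ^^ k) x)"
  have "(s ^^ k) x = (s ^^ (k + i)) a" for k unfolding x_def by (simp add: funpow_add)
  then have CL: "C \<subseteq> L" unfolding C_def using orbit by auto
  have "s ` C = C"
  proof
    show "s ` C \<subseteq> C"
    proof (rule image_subsetI)
      fix z assume "z \<in> C"
      then obtain k where "z = (s ^^ k) x" unfolding C_def by blast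
      then have "s z = (s ^^ Suc k) x" by simp
      then show "s z \<in> C" unfolding C_def by blast
    qed
    have period: "(s ^^ k) x = (s ^^ (k + Suc p)) x" for k unfolding funpow_add comp_def per ..
    have "(s ^^ k) x = s ((s ^^ (k + p)) x)" for k using period[of k] by simp
    then show "C \<subseteq> s ` C" unfolding C_def by blast
  qed
  then have "bij_betw s C C"
    using finite_subset[OF CL L(1)] by (simp add: bij_betw_def eq_card_imp_inj_on)
  then show ?thesis using that CL unfolding C_def by blast
qed

lemma trancl_loop_imp_cycle:
  assumes A: "finite A" and R: "R \<subseteq> A \<times> A" and loop: "(a, a) \<in> R\<^sup>+"
  obtains C s where "C \<subseteq> A" "C \<noteq> {}" "bij_betw s C C" "\<And>z. z \<in> C \<Longrightarrow> (z, s z) \<in> R"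
proof -
  define L where "L = {x. (x, x) \<in> R\<^sup>+}"
  have "\<exists>x'. (x, x') \<in> R \<and> x' \<in> L" if x: "x \<in> L" for x
  proof -
    obtain x' where "(x, x') \<in> R" "(x', x) \<in> R\<^sup>*"
      using x tranclD[of x x R] unfolding L_def by blast
    moreover from this have "(x', x') \<in> R\<^sup>+" by (simp add: rtrancl_into_trancl1)
    ultimately show ?thesis unfolding L_def by blast
  qed
  then obtain s where s: "\<And>x. x \<in> L \<Longrightarrow> (x, s x) \<in> R \<and> s x \<in> L" by metis
  then have LA: "L \<subseteq> A" using R by blast
  have "a \<in> L" using loop unfolding L_def by simp
  then obtain C where "C \<subseteq> L" "C \<noteq> {}" "bij_betw s C C"
    using finite_invariant_set_has_cycle[OF finite_subset[OF LA A]] s by blast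
  then show ?thesis using that[of C s] s LA by blast
qed

lemma trancl_Un_absorbed:
  assumes U: "trans U" and absorb: "U O R \<subseteq> R"
  shows "(R \<union> U)\<^sup>+ \<subseteq> R\<^sup>+ \<union> U \<union> R\<^sup>+ O U"
proof (rule subrelI)
  fix a b assume "(a, b) \<in> (R \<union> U)\<^sup>+"
  then show "(a, b) \<in> R\<^sup>+ \<union> U \<union> R\<^sup>+ O U"
  proof (induction rule: trancl_induct)
    case (step b c)
    from step.hyps(2) show ?case
    proof
      assume bc: "(b, c) \<in> R"
      from step.IH show ?thesis
      proof (elim UnE relcompE)
        assume "(a, b) \<in> U" then show ?thesis using bc absorb by blast
      next
        fix x y d assume "(a, b) = (x, y)" "(x, d) \<in> R\<^sup>+" "(d, y) \<in> U"
        then have "(d, c) \<in> R" using bc absorb by blast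
        then show ?thesis using \<open>(x, d) \<in> R\<^sup>+\<close> \<open>(a, b) = (x, y)\<close> by (simp add: trancl_into_trancl)
      qed (use bc in \<open>auto intro: trancl_into_trancl\<close>)
    next
      assume bc: "(b, c) \<in> U"
      from step.IH show ?thesis
      proof (elim UnE relcompE)
        assume "(a, b) \<in> U" then show ?thesis using bc U transD by fast
      next
        fix x y d assume "(a, b) = (x, y)" "(x, d) \<in> R\<^sup>+" "(d, y) \<in> U"
        then have "(d, c) \<in> U" using bc U transD by fast
        then show ?thesis using \<open>(x, d) \<in> R\<^sup>+\<close> \<open>(a, b) = (x, y)\<close> by blast
      qed (use bc in auto)
    qed
  qed blast
qed

lemma acyclic_Un_if_absorbed:
  assumes R: "acyclic R" and U: "trans U" "irrefl U" and absorb: "U O R \<subseteq> R"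
  shows "acyclic (R \<union> U)"
  unfolding acyclic_def
proof (intro allI notI)
  fix a assume "(a, a) \<in> (R \<union> U)\<^sup>+"
  then consider "(a, a) \<in> R\<^sup>+" | "(a, a) \<in> U" | c where "(a, c) \<in> R\<^sup>+" "(c, a) \<in> U"
    using trancl_Un_absorbed[OF U(1) absorb] by blast
  then show False
  proof cases
    case 3
    then obtain d where "(c, d) \<in> R" "(d, c) \<in> R\<^sup>*" using absorb by (blast dest: tranclD)
    then have "(c, c) \<in> R\<^sup>+" by (rule rtrancl_into_trancl2)
    then show ?thesis using R by (simp add: acyclic_def)
  qed (use R U(2) in \<open>auto simp: acyclic_def irrefl_def\<close>)
qed

lemma permutes_id_if_acyclic_steps:
  assumes r: "r permutes S" and S: "finite S" and T: "acyclic T"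
    and step: "\<And>i. i \<in> S \<Longrightarrow> r i = i \<or> (f i, f (r i)) \<in> T\<^sup>+"
    and i: "i \<in> S"
  shows "r i = i"
proof (rule ccontr)
  assume ri: "r i \<noteq> i"
  have orbit: "(r ^^ k) i \<in> S" for k
    by (induction k) (auto simp: i permutes_in_image[OF r])
  have "{y. \<exists>k. y = (r ^^ k) i} \<subseteq> S" using orbit by blast
  then have "finite {y. \<exists>k. y = (r ^^ k) i}" using S by (rule finite_subset)
  with permutes_inj[OF r] obtain p where p: "p > 0" "(r ^^ p) i = i"
    by (rule funpow_inj_finite)
  have chain: "(f i, f ((r ^^ k) i)) \<in> T\<^sup>+" if "k \<ge> 1" for k
    using that
  proof (induction k rule: nat_induct_at_least)
    case base
    then show ?case using step[OF i] ri by simp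
  next
    case (Suc k)
    then show ?case using step[OF orbit[of k]] by (auto intro: trancl_trans)
  qed
  show False using chain[of p] p T by (simp add: acyclic_def)
qed

lemma matching_permutation:
  fixes n :: nat
  assumes y: "bij_betw y {0..<n} Y" and \<sigma>: "bij_betw \<sigma> Y P" and p: "bij_betw p {0..<n} P"
  obtains \<tau> where "\<tau> permutes {0..<n}" "\<And>i. i < n \<Longrightarrow> p (\<tau> i) = \<sigma> (y i)"
proof
  define \<tau> where "\<tau> i = (if i < n then inv_into {0..<n} p (\<sigma> (y i)) else i)" for i
  have "bij_betw (inv_into {0..<n} p \<circ> \<sigma> \<circ> y) {0..<n} {0..<n}"
    using y \<sigma> bij_betw_inv_into[OF p] by (blast intro: bij_betw_trans)
  then have "bij_betw \<tau> {0..<n} {0..<n}" by (rule bij_betw_cong[THEN iffD1, rotated]) (simp add: \<tau>_def)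
  then show "\<tau> permutes {0..<n}" by (rule bij_imp_permutes) (auto simp: \<tau>_def)
  fix i assume i: "i < n"
  then have "\<sigma> (y i) \<in> p ` {0..<n}" using bij_betwE[OF \<sigma>] bij_betwE[OF y] bij_betw_imp_surj_on[OF p] by simp
  then show "p (\<tau> i) = \<sigma> (y i)" using i unfolding \<tau>_def by (simp add: f_inv_into_f)
qed

lemma det_nonzero_if_acyclic_support:
  fixes M :: "'a :: idom mat"
  assumes M: "M \<in> carrier_mat n n" and \<tau>: "\<tau> permutes {0..<n}" and T: "acyclic T"
    and diag: "\<And>i. i < n \<Longrightarrow> M $$ (i, \<tau> i) \<noteq> 0"
    and off: "\<And>i j. i < n \<Longrightarrow> j < n \<Longrightarrow> i \<noteq> j \<Longrightarrow> M $$ (i, \<tau> j) \<noteq> 0 \<Longrightarrow> (f i, f j) \<in> T\<^sup>+"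
  shows "det M \<noteq> 0"
proof -
  have unique: "q = \<tau>" if q: "q permutes {0..<n}" and nz: "\<forall>i<n. M $$ (i, q i) \<noteq> 0" for q
  proof -
    define r where "r = inv_into UNIV \<tau> \<circ> q"
    have r: "r permutes {0..<n}" unfolding r_def using q \<tau> by (simp add: permutes_compose permutes_inv)
    have \<tau>r: "\<tau> (r i) = q i" for i unfolding r_def using permutes_inverses(1)[OF \<tau>] by simp
    have "r i = i \<or> (f i, f (r i)) \<in> T\<^sup>+" if "i \<in> {0..<n}" for i
    proof -
      have "i < n" "r i < n" using that permutes_in_image[OF r] by auto
      then show ?thesis using off[of i "r i"] nz \<tau>r by (cases "r i = i") auto
    qed
    then have "r i = i" if "i \<in> {0..<n}" for i
      using permutes_id_if_acyclic_steps[OF r _ T] that by blast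
    then have "r = id" using permutes_not_in[OF r] by (metis eq_id_iff)
    then show "q = \<tau>" using \<tau>r by auto
  qed
  have "det M = (\<Sum>q\<in>{q. q permutes {0..<n}}. signof q * (\<Prod>i = 0..<n. M $$ (i, q i)))"
    using det_def'[OF M] .
  also have "\<dots> = signof \<tau> * (\<Prod>i = 0..<n. M $$ (i, \<tau> i))"
    using unique \<tau> by (intro sum.mono_neutral_right[where S = "{\<tau>}", simplified])
      (auto simp: finite_permutations prod_zero_iff)
  also have "\<dots> \<noteq> 0" using diag by (simp add: prod_zero_iff sign_def)
  finally show ?thesis .
qed

section \<open>Walks and half-treks\<close>

fun walk :: "(nat \<times> nat) set \<Rightarrow> nat list \<Rightarrow> bool" where
  "walk D [] \<longleftrightarrow> False"
| "walk D [a] \<longleftrightarrow> True"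
| "walk D (a # b # ws) \<longleftrightarrow> (a, b) \<in> D \<and> walk D (b # ws)"

lemma directed_walk_Cons_Cons:
  "directed_walk D (a # b # ws) \<longleftrightarrow> (a, b) \<in> D \<and> directed_walk D (b # ws)"
proof -
  have "(\<forall>i. Suc i < length (a # b # ws) \<longrightarrow> ((a # b # ws) ! i, (a # b # ws) ! Suc i) \<in> D)
    \<longleftrightarrow> (a, b) \<in> D \<and> (\<forall>i. Suc i < length (b # ws) \<longrightarrow> ((b # ws) ! i, (b # ws) ! Suc i) \<in> D)"
    by (auto simp: nth_Cons split: nat.splits)
  then show ?thesis unfolding directed_walk_def by simp
qed

lemma walk_iff_directed_walk: "walk D ws \<longleftrightarrow> directed_walk D ws"
  by (induction D ws rule: walk.induct) (auto simp: directed_walk_Cons_Cons, simp_all add: directed_walk_def)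

lemma walk_append:
  "walk D (xs @ y # zs) \<longleftrightarrow> walk D (xs @ [y]) \<and> walk D (y # zs)"
proof (induction xs)
  case Nil
  then show ?case by (cases zs) auto
next
  case (Cons a xs)
  then show ?case by (cases xs) auto
qed

lemma walk_drop: "walk D ws \<Longrightarrow> k < length ws \<Longrightarrow> walk D (drop k ws)"
  unfolding walk_iff_directed_walk directed_walk_def by (auto simp: add.commute)

lemma walk_nth: "walk D ws \<Longrightarrow> Suc i < length ws \<Longrightarrow> (ws ! i, ws ! Suc i) \<in> D"
  by (simp add: walk_iff_directed_walk directed_walk_def)

lemma half_trek_iff_walk: "half_trek D B y ws w \<longleftrightarrow> walk D ws \<and> last ws = w \<and> ((y, hd ws) \<in> B \<or> hd ws = y)"
  unfolding half_trek_def walk_iff_directed_walk ..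

lemma half_trek_nonempty: "half_trek D B y ws w \<Longrightarrow> ws \<noteq> []"
  unfolding half_trek_def directed_walk_def by blast

lemma half_trek_drop:
  assumes "half_trek D B y ws w" and "k < length ws" and "ws ! k = z \<or> (z, ws ! k) \<in> B"
  shows "half_trek D B z (drop k ws) w"
  using assms walk_drop[of D ws k] by (auto simp: half_trek_iff_walk hd_drop_conv_nth)

lemma half_trek_remove_loop:
  assumes h: "half_trek D B y ws w" and "\<not> distinct ws"
  obtains ws' where "half_trek D B y ws' w" "hd ws' = hd ws" "set ws' \<subseteq> set ws" "length ws' < length ws"
proof -
  obtain xs u vs zs where ws: "ws = xs @ [u] @ vs @ [u] @ zs"
    using not_distinct_decomp[OF \<open>\<not> distinct ws\<close>] by blast
  have "walk D (xs @ u # vs @ u # zs)" using h ws by (simp add: half_trek_iff_walk)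
  then have "walk D (xs @ u # zs)"
    using walk_append[of D xs u "vs @ u # zs"] walk_append[of D "u # vs" u zs] walk_append[of D xs u zs] by simp
  moreover have "hd (xs @ u # zs) = hd ws" using ws by (cases xs) auto
  moreover have "last (xs @ u # zs) = last ws" using ws by (cases zs) auto
  ultimately have "half_trek D B y (xs @ u # zs) w" using h by (simp add: half_trek_iff_walk)
  moreover have "set (xs @ u # zs) \<subseteq> set ws" "length (xs @ u # zs) < length ws" using ws by auto
  ultimately show ?thesis using that \<open>hd (xs @ u # zs) = hd ws\<close> by blast
qed

section \<open>Half-trek systems of minimal cost\<close>

definition half_trek_system ::
  "(nat \<times> nat) set \<Rightarrow> (nat \<times> nat) set \<Rightarrow> nat set \<Rightarrow> nat set \<Rightarrow> (nat \<Rightarrow> nat) \<Rightarrow> (nat \<Rightarrow> nat list) \<Rightarrow> bool" where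
  "half_trek_system D B Y P \<sigma> \<pi> \<longleftrightarrow> bij_betw \<sigma> Y P \<and> (\<forall>y\<in>Y. half_trek D B y (\<pi> y) (\<sigma> y)) \<and>
     (\<forall>y1\<in>Y. \<forall>y2\<in>Y. y1 \<noteq> y2 \<longrightarrow> set (\<pi> y1) \<inter> set (\<pi> y2) = {})"

lemma system_no_sided_intersection_iff:
  "system_no_sided_intersection D B Y P \<longleftrightarrow> (\<exists>\<sigma> \<pi>. half_trek_system D B Y P \<sigma> \<pi>)"
  unfolding system_no_sided_intersection_def half_trek_system_def ..

lemma half_trek_system_reroute:
  assumes sys: "half_trek_system D B Y P \<sigma> \<pi>" and s: "bij_betw s Y Y"
    and reroute: "\<And>y. y \<in> Y \<Longrightarrow> half_trek D B y (\<pi>' y) (\<sigma> (s y)) \<and> set (\<pi>' y) \<subseteq> set (\<pi> (s y))"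
  shows "half_trek_system D B Y P (\<sigma> \<circ> s) \<pi>'"
proof -
  have "bij_betw (\<sigma> \<circ> s) Y P" using s sys unfolding half_trek_system_def by (blast intro: bij_betw_trans)
  moreover have "set (\<pi>' y1) \<inter> set (\<pi>' y2) = {}" if "y1 \<in> Y" "y2 \<in> Y" "y1 \<noteq> y2" for y1 y2
  proof -
    have "s y1 \<noteq> s y2" "s y1 \<in> Y" "s y2 \<in> Y"
      using s that unfolding bij_betw_def inj_on_def by auto
    then show ?thesis using sys reroute that unfolding half_trek_system_def by blast
  qed
  ultimately show ?thesis using reroute unfolding half_trek_system_def by auto
qed

text \<open>Shorter half-treks are cheaper, and among half-treks of equal length those starting with a
  directed edge are cheaper: dropping a node lowers the length term by 2, which outweighs the
  possible change of the start bit.\<close>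
definition trek_cost :: "nat \<Rightarrow> nat list \<Rightarrow> nat" where
  "trek_cost y ws = 2 * length ws + (if hd ws = y then 0 else 1)"

definition system_cost :: "nat set \<Rightarrow> (nat \<Rightarrow> nat list) \<Rightarrow> nat" where
  "system_cost Y \<pi> = (\<Sum>y\<in>Y. trek_cost y (\<pi> y))"

lemma min_cost_half_trek_system_exists:
  assumes "system_no_sided_intersection D B Y P"
  obtains \<sigma> \<pi> where "half_trek_system D B Y P \<sigma> \<pi>"
    "\<And>\<sigma>' \<pi>'. half_trek_system D B Y P \<sigma>' \<pi>' \<Longrightarrow> system_cost Y \<pi> \<le> system_cost Y \<pi>'"
proof -
  obtain x where "half_trek_system D B Y P (fst x) (snd x)"
    using assms unfolding system_no_sided_intersection_iff by auto
  from ex_has_least_nat[of "\<lambda>x. half_trek_system D B Y P (fst x) (snd x)", OF this, of "\<lambda>x. system_cost Y (snd x)"]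
  show ?thesis using that by fastforce
qed

locale min_cost_half_trek_system =
  fixes D B :: "(nat \<times> nat) set" and Y P :: "nat set" and \<sigma> :: "nat \<Rightarrow> nat" and \<pi> :: "nat \<Rightarrow> nat list"
  assumes finite_Y: "finite Y"
    and system: "half_trek_system D B Y P \<sigma> \<pi>"
    and min_cost: "\<And>\<sigma>' \<pi>'. half_trek_system D B Y P \<sigma>' \<pi>' \<Longrightarrow> system_cost Y \<pi> \<le> system_cost Y \<pi>'"
begin

lemma trek: "y \<in> Y \<Longrightarrow> half_trek D B y (\<pi> y) (\<sigma> y)"
  using system unfolding half_trek_system_def by blast

lemma trek_nonempty: "y \<in> Y \<Longrightarrow> \<pi> y \<noteq> []"
  using half_trek_nonempty[OF trek] .

lemma treks_disjoint: "y1 \<in> Y \<Longrightarrow> y2 \<in> Y \<Longrightarrow> x \<in> set (\<pi> y1) \<Longrightarrow> x \<in> set (\<pi> y2) \<Longrightarrow> y1 = y2"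
  using system unfolding half_trek_system_def by blast

lemma sigma_bij: "bij_betw \<sigma> Y P"
  using system unfolding half_trek_system_def by blast

lemma trek_cost_le:
  assumes y: "y \<in> Y" and ws: "half_trek D B y ws (\<sigma> y)" "set ws \<subseteq> set (\<pi> y)"
  shows "trek_cost y (\<pi> y) \<le> trek_cost y ws"
proof (rule ccontr)
  assume less: "\<not> ?thesis"
  have "half_trek_system D B Y P (\<sigma> \<circ> id) (\<pi>(y := ws))"
    using ws trek by (intro half_trek_system_reroute[OF system]) auto
  moreover have "system_cost Y (\<pi>(y := ws)) < system_cost Y \<pi>"
    using finite_Y y less by (simp add: system_cost_def sum.remove)
  ultimately show False using min_cost by fastforce
qed

lemma distinct_trek:
  assumes y: "y \<in> Y" shows "distinct (\<pi> y)"
proof (rule ccontr)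
  assume "\<not> distinct (\<pi> y)"
  then obtain ws where ws: "half_trek D B y ws (\<sigma> y)" "hd ws = hd (\<pi> y)" "set ws \<subseteq> set (\<pi> y)"
    "length ws < length (\<pi> y)"
    using half_trek_remove_loop[OF trek[OF y]] by blast
  have "trek_cost y (\<pi> y) \<le> trek_cost y ws" using trek_cost_le[OF y ws(1,3)] .
  then show False using ws(2,4) by (simp add: trek_cost_def)
qed

lemma trek_hd_if_source_on_trek:
  assumes y: "y \<in> Y" and on: "y \<in> set (\<pi> y)"
  shows "hd (\<pi> y) = y"
proof (rule ccontr)
  assume hd: "hd (\<pi> y) \<noteq> y"
  obtain k where k: "k < length (\<pi> y)" "\<pi> y ! k = y" using on by (meson in_set_conv_nth)
  have "half_trek D B y (drop k (\<pi> y)) (\<sigma> y)" using half_trek_drop[OF trek[OF y] k(1)] k(2) by simp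
  then have "trek_cost y (\<pi> y) \<le> trek_cost y (drop k (\<pi> y))"
    using trek_cost_le[OF y] by (simp add: set_drop_subset)
  then show False using hd k by (simp add: trek_cost_def hd_drop_conv_nth)
qed

text \<open>If the source of each trek in a cycle lies on the trek of the next one, each source could take
  over the tail of that trek starting at itself, which is strictly cheaper.\<close>
lemma no_cycle_of_sources_on_treks:
  assumes C: "C \<subseteq> Y" "C \<noteq> {}" and s: "bij_betw s C C"
    and on: "\<And>z. z \<in> C \<Longrightarrow> z \<noteq> s z \<and> z \<in> set (\<pi> (s z))"
  shows False
proof -
  define s' where "s' z = (if z \<in> C then s z else z)" for z
  define k where "k z = (SOME k. k < length (\<pi> (s z)) \<and> \<pi> (s z) ! k = z)" for z
  define \<pi>' where "\<pi>' z = (if z \<in> C then drop (k z) (\<pi> (s z)) else \<pi> z)" for z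
  have k: "k z < length (\<pi> (s z)) \<and> \<pi> (s z) ! k z = z" if "z \<in> C" for z
  proof -
    have "\<exists>k. k < length (\<pi> (s z)) \<and> \<pi> (s z) ! k = z" using on[OF that] by (simp add: in_set_conv_nth)
    then show ?thesis unfolding k_def by (rule someI_ex)
  qed
  have "bij_betw s' C C" using s bij_betw_cong[of C s' s C] by (simp add: s'_def)
  then have "s' permutes C" by (rule bij_imp_permutes) (simp add: s'_def)
  then have s': "bij_betw s' Y Y" using permutes_imp_bij permutes_subset C(1) by blast
  have sC: "s z \<in> C" if "z \<in> C" for z using bij_betwE[OF s] that by blast
  have "half_trek D B z (\<pi>' z) (\<sigma> (s' z)) \<and> set (\<pi>' z) \<subseteq> set (\<pi> (s' z))" if "z \<in> Y" for z
    using that k half_trek_drop[OF trek, of "s z" "k z" z] sC C(1) trek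
    by (auto simp: \<pi>'_def s'_def set_drop_subset)
  then have "half_trek_system D B Y P (\<sigma> \<circ> s') \<pi>'" by (rule half_trek_system_reroute[OF system s'])
  moreover have "trek_cost z (\<pi>' z) \<le> trek_cost (s' z) (\<pi> (s' z))" if "z \<in> Y" for z
    using k[of z] on[of z] trek_nonempty[of "s z"] sC[of z] C(1)
    by (cases "k z") (auto simp: \<pi>'_def s'_def trek_cost_def hd_conv_nth)
  moreover obtain z where "z \<in> C" using C(2) by blast
  then have "trek_cost z (\<pi>' z) < trek_cost (s' z) (\<pi> (s' z))"
    using k[of z] on[of z] trek_nonempty[of "s z"] sC[of z] C(1)
    by (cases "k z") (auto simp: \<pi>'_def s'_def trek_cost_def hd_conv_nth)
  ultimately have "system_cost Y \<pi>' < (\<Sum>z\<in>Y. trek_cost (s' z) (\<pi> (s' z)))"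
    unfolding system_cost_def using finite_Y \<open>z \<in> C\<close> C(1) by (intro sum_strict_mono_ex1) auto
  also have "\<dots> = system_cost Y \<pi>"
    unfolding system_cost_def using sum.reindex_bij_betw[OF s', of "\<lambda>z. trek_cost z (\<pi> z)"] .
  finally show False using min_cost[OF \<open>half_trek_system D B Y P (\<sigma> \<circ> s') \<pi>'\<close>] by simp
qed

definition on_trek :: "(nat \<times> nat) set" where
  "on_trek = {(a, w). a \<in> Y \<and> w \<in> Y \<and> a \<noteq> w \<and> a \<in> set (\<pi> w)}"

lemma on_trek_acyclic: "acyclic on_trek"
  unfolding acyclic_def
proof (intro allI notI)
  fix a assume "(a, a) \<in> on_trek\<^sup>+"
  moreover have "on_trek \<subseteq> Y \<times> Y" unfolding on_trek_def by blast
  ultimately obtain C s where "C \<subseteq> Y" "C \<noteq> {}" "bij_betw s C C" "\<And>z. z \<in> C \<Longrightarrow> (z, s z) \<in> on_trek"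
    using trancl_loop_imp_cycle[OF finite_Y] by blast
  then show False using no_cycle_of_sources_on_treks unfolding on_trek_def by blast
qed

lemma trek_position_unique:
  assumes "y \<in> Y" "y' \<in> Y" "i < length (\<pi> y)" "i' < length (\<pi> y')" "\<pi> y ! i = \<pi> y' ! i'"
  shows "y = y' \<and> i = i'"
proof -
  have "y = y'" using assms treks_disjoint by (metis nth_mem)
  then show ?thesis using assms distinct_trek nth_eq_iff_index_eq by metis
qed

definition precedes :: "nat \<Rightarrow> nat \<Rightarrow> bool" where
  "precedes a b \<longleftrightarrow> (\<exists>y\<in>Y. \<exists>i j. i < j \<and> j < length (\<pi> y) \<and> \<pi> y ! i = a \<and> \<pi> y ! j = b)"

definition trek_edge :: "nat \<Rightarrow> nat \<Rightarrow> bool" where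
  "trek_edge a b \<longleftrightarrow> (\<exists>y\<in>Y. \<exists>i. Suc i < length (\<pi> y) \<and> \<pi> y ! i = a \<and> \<pi> y ! Suc i = b)"

lemma precedes_irrefl: "\<not> precedes a a"
  unfolding precedes_def using trek_position_unique by (metis order.strict_trans less_not_refl)

lemma precedes_trans: "precedes a b \<Longrightarrow> precedes b c \<Longrightarrow> precedes a c"
  unfolding precedes_def using trek_position_unique by (metis order.strict_trans)

lemma precedes_on_trek: "precedes a b \<Longrightarrow> a \<in> set (\<pi> y) \<Longrightarrow> y \<in> Y \<Longrightarrow> b \<in> set (\<pi> y)"
  unfolding precedes_def using treks_disjoint by (metis nth_mem order.strict_trans)

lemma precedes_last_iff_on_trek:
  assumes y: "y \<in> Y"
  shows "c = \<sigma> y \<or> precedes c (\<sigma> y) \<longleftrightarrow> c \<in> set (\<pi> y)"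
proof
  define l where "l = length (\<pi> y) - 1"
  have l: "l < length (\<pi> y)" "\<pi> y ! l = \<sigma> y"
    using trek[OF y] trek_nonempty[OF y] unfolding l_def half_trek_def by (auto simp: last_conv_nth)
  {
    assume "c \<in> set (\<pi> y)"
    then obtain i where i: "i < length (\<pi> y)" "\<pi> y ! i = c" by (auto simp: in_set_conv_nth)
    show "c = \<sigma> y \<or> precedes c (\<sigma> y)"
    proof (cases "i = l")
      case False
      then have "i < l" using i(1) unfolding l_def by simp
      then show ?thesis using y i l unfolding precedes_def by blast
    qed (use i l in simp)
  }
  assume "c = \<sigma> y \<or> precedes c (\<sigma> y)"
  then show "c \<in> set (\<pi> y)"
  proof
    assume "precedes c (\<sigma> y)"
    then obtain x i j where x: "x \<in> Y" "i < j" "j < length (\<pi> x)" "\<pi> x ! i = c" "\<pi> x ! j = \<sigma> y"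
      unfolding precedes_def by blast
    then have "x = y" using trek_position_unique[of x y j l] l y by simp
    then show ?thesis using x nth_mem[of i "\<pi> y"] by simp
  qed (use l nth_mem[of l "\<pi> y"] in simp)
qed

lemma precedes_source_not_on_own_trek:
  assumes y: "y \<in> Y" and "precedes u y"
  shows "y \<notin> set (\<pi> y)"
proof
  assume "y \<in> set (\<pi> y)"
  then have "\<pi> y ! 0 = y" using trek_hd_if_source_on_trek[OF y] trek_nonempty[OF y] by (simp add: hd_conv_nth)
  moreover obtain x i j where "x \<in> Y" "i < j" "j < length (\<pi> x)" "\<pi> x ! j = y"
    using \<open>precedes u y\<close> unfolding precedes_def by blast
  ultimately show False using trek_position_unique[OF y, of x 0 j] trek_nonempty[OF y] by auto
qed

lemma precedes_from_position:
  assumes "y \<in> Y" "i < length (\<pi> y)"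
  shows "precedes (\<pi> y ! i) b \<longleftrightarrow> (\<exists>j. i < j \<and> j < length (\<pi> y) \<and> \<pi> y ! j = b)"
proof
  assume "precedes (\<pi> y ! i) b"
  then obtain y' i' j where h: "y' \<in> Y" "i' < j" "j < length (\<pi> y')" "\<pi> y' ! i' = \<pi> y ! i" "\<pi> y' ! j = b"
    unfolding precedes_def by blast
  then have "y' = y \<and> i' = i" using trek_position_unique[of y' y i' i] assms by simp
  then show "\<exists>j. i < j \<and> j < length (\<pi> y) \<and> \<pi> y ! j = b" using h by blast
qed (use assms in \<open>auto simp: precedes_def\<close>)

lemma trek_edge_precedes:
  assumes "trek_edge a c"
  shows "precedes a b \<longleftrightarrow> c = b \<or> precedes c b"
proof -
  obtain y i where y: "y \<in> Y" "Suc i < length (\<pi> y)" and a: "a = \<pi> y ! i" and c: "c = \<pi> y ! Suc i"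
    using assms unfolding trek_edge_def by blast
  have "(\<exists>j>i. j < length (\<pi> y) \<and> \<pi> y ! j = b) \<longleftrightarrow>
    \<pi> y ! Suc i = b \<or> (\<exists>j>Suc i. j < length (\<pi> y) \<and> \<pi> y ! j = b)"
  proof
    assume "\<exists>j>i. j < length (\<pi> y) \<and> \<pi> y ! j = b"
    then obtain j where j: "i < j" "j < length (\<pi> y)" "\<pi> y ! j = b" by blast
    show "\<pi> y ! Suc i = b \<or> (\<exists>j>Suc i. j < length (\<pi> y) \<and> \<pi> y ! j = b)"
    proof (cases "j = Suc i")
      case False
      then have "Suc i < j" using j(1) by simp
      then show ?thesis using j by blast
    qed (use j in simp)
  qed (use y(2) Suc_lessD in blast)
  then show ?thesis
    unfolding a c precedes_from_position[OF y(1) Suc_lessD[OF y(2)]] precedes_from_position[OF y]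
    by blast
qed

lemma precedes_imp_trek_edge_from:
  assumes "precedes a b" obtains c where "trek_edge a c"
proof -
  obtain y i j where "y \<in> Y" "i < j" "j < length (\<pi> y)" "\<pi> y ! i = a"
    using assms unfolding precedes_def by blast
  then have "trek_edge a (\<pi> y ! Suc i)" unfolding trek_edge_def by (intro bexI[of _ y] exI[of _ i]) auto
  then show ?thesis using that by blast
qed

lemma trek_edge_unique_succ:
  assumes "trek_edge a c" "trek_edge a c'" shows "c = c'"
proof -
  obtain y i y' i' where h: "y \<in> Y" "y' \<in> Y" "Suc i < length (\<pi> y)" "Suc i' < length (\<pi> y')"
    "\<pi> y ! i = a" "\<pi> y' ! i' = a" "\<pi> y ! Suc i = c" "\<pi> y' ! Suc i' = c'"
    using assms unfolding trek_edge_def by blast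
  then have "y = y' \<and> i = i'" using trek_position_unique[of y y' i i'] by simp
  then show ?thesis using h by simp
qed

lemma trek_edge_in_D:
  assumes "trek_edge a b" shows "(a, b) \<in> D"
proof -
  obtain y i where "y \<in> Y" "Suc i < length (\<pi> y)" "\<pi> y ! i = a" "\<pi> y ! Suc i = b"
    using assms unfolding trek_edge_def by blast
  then show ?thesis using walk_nth[of D "\<pi> y" i] trek by (simp add: half_trek_iff_walk)
qed

definition follows :: "(nat \<times> nat) set" where
  "follows = {(a, w). a \<in> Y \<and> w \<in> Y \<and> precedes w a}"

lemma dependency_acyclic: "acyclic (on_trek \<union> follows)"
proof (rule acyclic_Un_if_absorbed[OF on_trek_acyclic])
  show "trans follows" unfolding follows_def trans_def using precedes_trans by blast
  show "irrefl follows" unfolding follows_def irrefl_def using precedes_irrefl by blast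
  show "follows O on_trek \<subseteq> on_trek"
  proof (rule subrelI, elim relcompE)
    fix a w x u y assume "(a, w) = (x, y)" and "(x, u) \<in> follows" and "(u, y) \<in> on_trek"
    then have "a = x" "w = y" "x \<in> Y" "y \<in> Y" "precedes u x" "u \<in> set (\<pi> y)"
      unfolding follows_def on_trek_def by auto
    moreover from this have "x \<in> set (\<pi> y)" using precedes_on_trek by blast
    moreover from calculation have "x \<noteq> y" using precedes_source_not_on_own_trek by blast
    ultimately show "(a, w) \<in> on_trek" unfolding on_trek_def by blast
  qed
qed

definition starts_bidirected :: "nat \<Rightarrow> nat \<Rightarrow> bool" where
  "starts_bidirected a b \<longleftrightarrow> a \<in> Y \<and> hd (\<pi> a) = b \<and> b \<noteq> a"

definition trek_link :: "nat \<Rightarrow> nat \<Rightarrow> bool" where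
  "trek_link u c \<longleftrightarrow> u = c \<or> starts_bidirected u c \<or> starts_bidirected c u"

lemma starts_bidirected_on_trek: "starts_bidirected a b \<Longrightarrow> b \<in> set (\<pi> a)"
  unfolding starts_bidirected_def using trek_nonempty by auto

lemma starts_bidirected_not_on_own_trek: "starts_bidirected a b \<Longrightarrow> a \<notin> set (\<pi> a)"
  unfolding starts_bidirected_def using trek_hd_if_source_on_trek by blast

text \<open>An entry \<open>(a, \<sigma> w)\<close> of \<open>Omega0 * N0\<close> or of \<open>N0\<^sup>T * Omega0 * N0\<close> below is a sum of terms
  indexed by nodes \<open>u\<close> and \<open>c\<close> as in the following lemma, so a nonzero entry yields a dependency.\<close>
lemma dependency_of_link:
  assumes a: "a \<in> Y" and w: "w \<in> Y" "a \<noteq> w"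
    and ua: "u = a \<or> precedes u a" and link: "trek_link u c" and c: "c \<in> set (\<pi> w)"
  shows "(a, w) \<in> (on_trek \<union> follows)\<^sup>+"
proof -
  have along: "a \<in> set (\<pi> x)" if "u \<in> set (\<pi> x)" "x \<in> Y" for x
    using ua that precedes_on_trek by blast
  consider "u = c" | "starts_bidirected u c" | "starts_bidirected c u"
    using link unfolding trek_link_def by blast
  then show ?thesis
  proof cases
    case 1
    then have "(a, w) \<in> on_trek" using along[of w] a w c unfolding on_trek_def by blast
    then show ?thesis by blast
  next
    case 2
    then have "u = w" using treks_disjoint[OF _ w(1) _ c] starts_bidirected_on_trek
      unfolding starts_bidirected_def by blast
    then have "(a, w) \<in> follows" using ua a w unfolding follows_def by blast
    then show ?thesis by blast
  next
    case 3
    then have cY: "c \<in> Y" and "u \<in> set (\<pi> c)"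
      using starts_bidirected_on_trek unfolding starts_bidirected_def by auto
    then have ac: "a \<in> set (\<pi> c)" using along by blast
    have "c \<noteq> w" using 3 c starts_bidirected_not_on_own_trek by blast
    then have cw: "(c, w) \<in> on_trek" using cY w c unfolding on_trek_def by blast
    show ?thesis
    proof (cases "a = c")
      case False
      then have "(a, c) \<in> on_trek" using a cY ac unfolding on_trek_def by blast
      then show ?thesis using cw by (meson UnI1 r_into_trancl trancl_into_trancl)
    qed (use cw in blast)
  qed
qed

end

section \<open>The witness parameters\<close>

text \<open>The point of \<open>Theta\<close> where \<open>det A \<noteq> 0\<close>: \<open>Lambda0\<close> is the indicator of the edges used by the
  treks, so that \<open>N0 = (I - Lambda0)\<^sup>-\<^sup>1\<close> is the indicator of ``equal or earlier on the same trek'';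
  \<open>Omega0\<close> is the identity plus a weight \<open>1 / (m + 1)\<close> on the bidirected edges that start treks,
  small enough to keep it positive definite.\<close>
locale trek_witness = min_cost_half_trek_system +
  fixes m :: nat
  assumes Y_bound: "Y \<subseteq> {0..<m}"
    and D_bound: "D \<subseteq> {0..<m} \<times> {0..<m}"
    and B_bound: "B \<subseteq> {0..<m} \<times> {0..<m}"
    and B_sym: "\<And>a b. (a, b) \<in> B \<Longrightarrow> (b, a) \<in> B"
begin

definition Lambda0 :: "real mat" where
  "Lambda0 = mat m m (\<lambda>(a, b). if trek_edge a b then 1 else 0)"

definition N0 :: "real mat" where
  "N0 = mat m m (\<lambda>(a, b). if a = b \<or> precedes a b then 1 else 0)"

definition Omega0 :: "real mat" where
  "Omega0 = mat m m (\<lambda>(a, b). if a = b then 1 else if trek_link a b then 1 / (real m + 1) else 0)"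

lemma Lambda0_carrier: "Lambda0 \<in> carrier_mat m m" and N0_carrier: "N0 \<in> carrier_mat m m"
  and Omega0_carrier: "Omega0 \<in> carrier_mat m m" and I_minus_Lambda0_carrier: "1\<^sub>m m - Lambda0 \<in> carrier_mat m m"
  unfolding Lambda0_def N0_def Omega0_def by auto

lemma trek_node_bound:
  assumes y: "y \<in> Y" and x: "x \<in> set (\<pi> y)"
  shows "x < m"
proof -
  obtain i where i: "i < length (\<pi> y)" "\<pi> y ! i = x" using x by (auto simp: in_set_conv_nth)
  show ?thesis
  proof (cases i)
    case 0
    then have "x = hd (\<pi> y)" using i trek_nonempty[OF y] by (simp add: hd_conv_nth)
    then show ?thesis using trek[OF y] y Y_bound B_bound by (auto simp: half_trek_def)
  next
    case (Suc j)
    then have "(\<pi> y ! j, x) \<in> D" using walk_nth[of D "\<pi> y" j] trek[OF y] i by (simp add: half_trek_iff_walk)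
    then show ?thesis using D_bound by auto
  qed
qed

lemma sigma_on_trek: "y \<in> Y \<Longrightarrow> \<sigma> y \<in> set (\<pi> y)"
  using trek[of y] trek_nonempty[of y] last_in_set[of "\<pi> y"] unfolding half_trek_def by simp

lemma sigma_bound: "y \<in> Y \<Longrightarrow> \<sigma> y < m"
  using trek_node_bound sigma_on_trek by blast

lemma trek_edge_bound: "trek_edge a b \<Longrightarrow> a < m \<and> b < m"
  using trek_edge_in_D[of a b] D_bound by auto

lemma Lambda0_N0_row:
  assumes ab: "a < m" "b < m"
  shows "(\<Sum>c\<in>{0..<m}. Lambda0 $$ (a, c) * N0 $$ (c, b)) = (if precedes a b then 1 else 0)"
proof (cases "\<exists>c. trek_edge a c")
  case True
  then obtain c0 where c0: "trek_edge a c0" by blast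
  have c0m: "c0 < m" using trek_edge_bound[OF c0] by simp
  have "Lambda0 $$ (a, c) * N0 $$ (c, b) = 0" if "c \<in> {0..<m} - {c0}" for c
    using that ab trek_edge_unique_succ[OF c0, of c] by (auto simp: Lambda0_def)
  then have "(\<Sum>c\<in>{0..<m}. Lambda0 $$ (a, c) * N0 $$ (c, b)) = Lambda0 $$ (a, c0) * N0 $$ (c0, b)"
    using c0m by (subst sum.mono_neutral_right[of "{0..<m}" "{c0}"]) auto
  also have "\<dots> = (if precedes a b then 1 else 0)"
    using c0 c0m ab trek_edge_precedes[OF c0, of b] by (simp add: Lambda0_def N0_def)
  finally show ?thesis .
next
  case False
  then have "\<not> precedes a b" using precedes_imp_trek_edge_from by metis
  moreover have "Lambda0 $$ (a, c) = 0" if "c < m" for c using False ab that by (auto simp: Lambda0_def)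
  ultimately show ?thesis by simp
qed

lemma I_minus_Lambda0_times_N0: "(1\<^sub>m m - Lambda0) * N0 = 1\<^sub>m m"
proof (rule eq_matI)
  fix a b assume "a < dim_row (1\<^sub>m m :: real mat)" "b < dim_col (1\<^sub>m m :: real mat)"
  then have ab: "a < m" "b < m" by auto
  have "((1\<^sub>m m - Lambda0) * N0) $$ (a, b) = (\<Sum>c\<in>{0..<m}. (1\<^sub>m m - Lambda0) $$ (a, c) * N0 $$ (c, b))"
    using ab Lambda0_carrier N0_carrier by (simp add: scalar_prod_def)
  also have "\<dots> = N0 $$ (a, b) - (\<Sum>c\<in>{0..<m}. Lambda0 $$ (a, c) * N0 $$ (c, b))"
    using ab Lambda0_carrier by (simp add: left_diff_distrib sum_subtractf if_distrib[of "\<lambda>x. x * _"] cong: if_cong)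
  also have "\<dots> = 1\<^sub>m m $$ (a, b)"
    unfolding Lambda0_N0_row[OF ab] using ab precedes_irrefl by (auto simp: N0_def)
  finally show "((1\<^sub>m m - Lambda0) * N0) $$ (a, b) = 1\<^sub>m m $$ (a, b)" .
qed (use Lambda0_carrier N0_carrier in auto)

lemma mat_inv_I_minus_Lambda0: "mat_inv m (1\<^sub>m m - Lambda0) = N0"
  using mat_inv_eqI[OF I_minus_Lambda0_carrier N0_carrier I_minus_Lambda0_times_N0] .

lemma trek_link_sym: "trek_link a b \<longleftrightarrow> trek_link b a"
  unfolding trek_link_def by blast

lemma trek_link_in_B: "trek_link a b \<Longrightarrow> a \<noteq> b \<Longrightarrow> (a, b) \<in> B"
  using trek B_sym unfolding trek_link_def starts_bidirected_def half_trek_def by blast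

lemma Omega0_pos_def: "pos_def_mat Omega0"
proof (rule pos_def_mat_near_identity[OF Omega0_carrier])
  show "real m * (1 / (real m + 1)) < 1" by (simp add: field_simps)
qed (auto simp: Omega0_def)

lemma witness_in_Theta: "(Lambda0, Omega0) \<in> Theta m D B"
proof -
  have "invertible_mat (1\<^sub>m m - Lambda0)"
    using I_minus_Lambda0_times_N0 mat_mult_left_right_inverse[OF I_minus_Lambda0_carrier N0_carrier I_minus_Lambda0_times_N0]
      I_minus_Lambda0_carrier N0_carrier Lambda0_carrier
    unfolding invertible_mat_def inverts_mat_def by (intro conjI exI[of _ N0]) auto
  moreover have "Omega0\<^sup>T = Omega0" using trek_link_sym by (intro eq_matI) (auto simp: Omega0_def)
  ultimately show ?thesis
    unfolding Theta_def using Lambda0_carrier Omega0_carrier Omega0_pos_def trek_edge_in_D trek_link_in_B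
    by (auto simp: Lambda0_def Omega0_def)
qed

definition Sigma0 :: "real mat" where
  "Sigma0 = N0\<^sup>T * (Omega0 * N0)"

lemma phi_witness: "phi m Lambda0 Omega0 = Sigma0"
  unfolding phi_def mat_inv_I_minus_Lambda0 Sigma0_def using N0_carrier Omega0_carrier
  by (simp add: assoc_mult_mat[of _ m m _ m _ m])

lemma I_minus_Lambda0_transpose_Sigma0: "(1\<^sub>m m - Lambda0)\<^sup>T * Sigma0 = Omega0 * N0"
  using congruence_by_inverse[OF I_minus_Lambda0_carrier N0_carrier Omega0_carrier
      mat_mult_left_right_inverse[OF I_minus_Lambda0_carrier N0_carrier I_minus_Lambda0_times_N0]]
  unfolding phi_witness[symmetric] phi_def mat_inv_I_minus_Lambda0 .

lemma nonneg_N0: "nonneg_mat N0" and nonneg_Omega0: "nonneg_mat Omega0"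
  unfolding nonneg_mat_def N0_def Omega0_def by auto

lemma nonneg_Omega0_N0: "nonneg_mat (Omega0 * N0)"
  using nonneg_N0 nonneg_Omega0 N0_carrier Omega0_carrier by (intro nonneg_mat_mult) auto

lemma Omega0_N0_diag_pos:
  assumes a: "a \<in> Y" shows "0 < (Omega0 * N0) $$ (a, \<sigma> a)"
proof -
  define c where "c = hd (\<pi> a)"
  have c: "c \<in> set (\<pi> a)" unfolding c_def using trek_nonempty[OF a] by simp
  have m: "a < m" "c < m" "\<sigma> a < m" using a Y_bound trek_node_bound[OF a c] sigma_bound[OF a] by auto
  have "0 < Omega0 $$ (a, c)" using m a unfolding Omega0_def trek_link_def starts_bidirected_def c_def by auto
  moreover have "N0 $$ (c, \<sigma> a) = 1" using m precedes_last_iff_on_trek[OF a] c by (simp add: N0_def)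
  ultimately have "0 < Omega0 $$ (a, c) * N0 $$ (c, \<sigma> a)" by simp
  also have "\<dots> \<le> (Omega0 * N0) $$ (a, \<sigma> a)"
    using nonneg_mult_mat_entry_ge[OF nonneg_Omega0 nonneg_N0 Omega0_carrier N0_carrier] m by blast
  finally show ?thesis .
qed

lemma Sigma0_diag_pos:
  assumes a: "a \<in> Y" shows "0 < Sigma0 $$ (a, \<sigma> a)"
proof -
  have m: "a < m" "\<sigma> a < m" using a Y_bound sigma_bound[OF a] by auto
  have "0 < N0\<^sup>T $$ (a, a) * (Omega0 * N0) $$ (a, \<sigma> a)" using Omega0_N0_diag_pos[OF a] m by (simp add: N0_def)
  also have "\<dots> \<le> (N0\<^sup>T * (Omega0 * N0)) $$ (a, \<sigma> a)"
    using nonneg_mult_mat_entry_ge[OF nonneg_mat_transpose[OF nonneg_N0] nonneg_Omega0_N0] N0_carrier Omega0_carrier m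
    by (meson mult_carrier_mat transpose_carrier_mat)
  finally show ?thesis unfolding Sigma0_def .
qed

lemma Omega0_N0_dependency:
  assumes a: "a \<in> Y" and w: "w \<in> Y" "a \<noteq> w" and u: "u < m" "u = a \<or> precedes u a"
    and nz: "(Omega0 * N0) $$ (u, \<sigma> w) \<noteq> 0"
  shows "(a, w) \<in> (on_trek \<union> follows)\<^sup>+"
proof -
  obtain c where c: "c < m" "Omega0 $$ (u, c) \<noteq> 0" "N0 $$ (c, \<sigma> w) \<noteq> 0"
    using mult_mat_entry_nonzero[OF Omega0_carrier N0_carrier u(1) sigma_bound[OF w(1)] nz] .
  then have "trek_link u c" using u(1) unfolding Omega0_def trek_link_def by (auto split: if_splits)
  moreover have "c \<in> set (\<pi> w)"
    using c u(1) sigma_bound[OF w(1)] precedes_last_iff_on_trek[OF w(1)] by (auto simp: N0_def split: if_splits)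
  ultimately show ?thesis using dependency_of_link[OF a w u(2)] by blast
qed

lemma Sigma0_dependency:
  assumes a: "a \<in> Y" and w: "w \<in> Y" "a \<noteq> w" and nz: "Sigma0 $$ (a, \<sigma> w) \<noteq> 0"
  shows "(a, w) \<in> (on_trek \<union> follows)\<^sup>+"
proof -
  have am: "a < m" using a Y_bound by auto
  obtain u where u: "u < m" "N0\<^sup>T $$ (a, u) \<noteq> 0" "(Omega0 * N0) $$ (u, \<sigma> w) \<noteq> 0"
    using mult_mat_entry_nonzero[OF _ mult_carrier_mat[OF Omega0_carrier N0_carrier] am sigma_bound[OF w(1)]
      nz[unfolded Sigma0_def]]
      N0_carrier by auto
  then have "u = a \<or> precedes u a" using am by (auto simp: N0_def split: if_splits)
  then show ?thesis using Omega0_N0_dependency[OF a w u(1) _ u(3)] by blast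
qed

lemma witness_det:
  assumes y: "bij_betw y {0..<n} Y" and p: "bij_betw p {0..<n} P"
  shows "det (matA m D B v n y p Lambda0 Omega0) \<noteq> 0"
proof -
  define F where "F a b = (if a \<in> htr m D B v then (Omega0 * N0) $$ (a, b) else Sigma0 $$ (a, b))" for a b
  obtain \<tau> where \<tau>: "\<tau> permutes {0..<n}" and p\<tau>: "\<And>i. i < n \<Longrightarrow> p (\<tau> i) = \<sigma> (y i)"
    using matching_permutation[OF y sigma_bij p] by blast
  have yY: "y i \<in> Y" if "i < n" for i using bij_betwE[OF y] that by simp
  have entry: "matA m D B v n y p Lambda0 Omega0 $$ (i, \<tau> j) = F (y i) (\<sigma> (y j))" if "i < n" "j < n" for i j
    using that permutes_in_image[OF \<tau>, of j] p\<tau>[OF that(2)]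
    unfolding matA_def Let_def phi_witness I_minus_Lambda0_transpose_Sigma0 by (simp add: F_def)
  show ?thesis
  proof (rule det_nonzero_if_acyclic_support[OF _ \<tau> dependency_acyclic])
    show "matA m D B v n y p Lambda0 Omega0 \<in> carrier_mat n n" by (simp add: matA_def Let_def)
    show "matA m D B v n y p Lambda0 Omega0 $$ (i, \<tau> i) \<noteq> 0" if "i < n" for i
      using entry[OF that that] Omega0_N0_diag_pos[OF yY[OF that]] Sigma0_diag_pos[OF yY[OF that]]
      by (auto simp: F_def)
    show "(y i, y j) \<in> (on_trek \<union> follows)\<^sup>+"
      if "i < n" "j < n" "i \<noteq> j" "matA m D B v n y p Lambda0 Omega0 $$ (i, \<tau> j) \<noteq> 0" for i j
    proof -
      have ne: "y i \<noteq> y j" using inj_onD[OF bij_betw_imp_inj_on[OF y], of i j] that(1-3) by auto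
      have yi: "y i < m" using yY[OF that(1)] Y_bound by auto
      have "F (y i) (\<sigma> (y j)) \<noteq> 0" using entry[OF that(1,2)] that(4) by simp
      then show ?thesis
        using Omega0_N0_dependency[OF yY[OF that(1)] yY[OF that(2)] ne yi disjI1[OF refl]]
          Sigma0_dependency[OF yY[OF that(1)] yY[OF that(2)] ne]
        unfolding F_def by (cases "y i \<in> htr m D B v") simp_all
    qed
  qed
qed

end

section \<open>Clearing denominators\<close>

text \<open>\<open>matA\<close> with its rows scaled by \<open>det (I - \<Lambda>)\<^sup>2\<close>: since \<open>(I - \<Lambda>)\<^sup>-\<^sup>1 = adj (I - \<Lambda>) / det (I - \<Lambda>)\<close>,
  this clears all denominators and makes the entries polynomial in the parameters.\<close>
definition cleared_matA ::
  "nat \<Rightarrow> (nat \<times> nat) set \<Rightarrow> (nat \<times> nat) set \<Rightarrow> nat \<Rightarrow> nat \<Rightarrow> (nat \<Rightarrow> nat) \<Rightarrow> (nat \<Rightarrow> nat)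
    \<Rightarrow> real mat \<times> real mat \<Rightarrow> real mat" where
  "cleared_matA m D B v n y p \<theta> =
     (let A = I_minus_Lambda m \<theta>; W = Omega m \<theta> in
      mat n n (\<lambda>(i, j). if y i \<in> htr m D B v then (det A \<cdot>\<^sub>m (W * adj_mat A)) $$ (y i, p j)
                        else ((adj_mat A)\<^sup>T * (W * adj_mat A)) $$ (y i, p j)))"

lemma poly_fun_det_cleared_matA:
  assumes y: "\<And>i. i < n \<Longrightarrow> y i < m" and p: "\<And>j. j < n \<Longrightarrow> p j < m"
  shows "poly_fun m (\<lambda>\<theta>. det (cleared_matA m D B v n y p \<theta>))"
proof -
  note A = poly_mat_I_minus_Lambda[of m] and W = poly_mat_Omega[of m]
  have adj: "poly_mat m m m (\<lambda>\<theta>. adj_mat (I_minus_Lambda m \<theta>))" using poly_mat_adj[OF A] .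
  have htr_rows: "poly_mat m m m (\<lambda>\<theta>. det (I_minus_Lambda m \<theta>) \<cdot>\<^sub>m (Omega m \<theta> * adj_mat (I_minus_Lambda m \<theta>)))"
    using poly_mat_smult[OF poly_mat_det[OF A] poly_mat_mult[OF W adj]] .
  have other_rows: "poly_mat m m m (\<lambda>\<theta>. (adj_mat (I_minus_Lambda m \<theta>))\<^sup>T * (Omega m \<theta> * adj_mat (I_minus_Lambda m \<theta>)))"
    using poly_mat_mult[OF poly_mat_transpose[OF adj] poly_mat_mult[OF W adj]] .
  have "poly_mat m n n (cleared_matA m D B v n y p)"
    unfolding cleared_matA_def Let_def
  proof (rule poly_mat_mat, unfold prod.case)
    fix i j assume "i < n" "j < n"
    then show "poly_fun m (\<lambda>\<theta>. if y i \<in> htr m D B v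
        then (det (I_minus_Lambda m \<theta>) \<cdot>\<^sub>m (Omega m \<theta> * adj_mat (I_minus_Lambda m \<theta>))) $$ (y i, p j)
        else ((adj_mat (I_minus_Lambda m \<theta>))\<^sup>T * (Omega m \<theta> * adj_mat (I_minus_Lambda m \<theta>))) $$ (y i, p j))"
      using poly_matD(2)[OF htr_rows] poly_matD(2)[OF other_rows] y p
      by (cases "y i \<in> htr m D B v") simp_all
  qed
  then show ?thesis by (rule poly_mat_det)
qed

lemma phi_via_adjugate:
  fixes \<Lambda> \<Omega> :: "real mat"
  assumes \<Lambda>: "\<Lambda> \<in> carrier_mat m m" and \<Omega>: "\<Omega> \<in> carrier_mat m m" and d: "det (1\<^sub>m m - \<Lambda>) \<noteq> 0"
  defines "Adj \<equiv> adj_mat (1\<^sub>m m - \<Lambda>)" and "c \<equiv> 1 / det (1\<^sub>m m - \<Lambda>)"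
  shows "phi m \<Lambda> \<Omega> = c\<^sup>2 \<cdot>\<^sub>m (Adj\<^sup>T * (\<Omega> * Adj))"
    and "(1\<^sub>m m - \<Lambda>)\<^sup>T * phi m \<Lambda> \<Omega> = c \<cdot>\<^sub>m (\<Omega> * Adj)"
proof -
  have A: "1\<^sub>m m - \<Lambda> \<in> carrier_mat m m" using \<Lambda> by auto
  then have Adj: "Adj \<in> carrier_mat m m" unfolding Adj_def by (rule adj_mat(1))
  define C where "C = c \<cdot>\<^sub>m Adj"
  have C: "C \<in> carrier_mat m m" unfolding C_def using Adj by simp
  have phi: "phi m \<Lambda> \<Omega> = C\<^sup>T * \<Omega> * C"
    unfolding phi_def C_def c_def Adj_def mat_inv_adj[OF A d] ..
  have CA: "C * (1\<^sub>m m - \<Lambda>) = 1\<^sub>m m"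
    using mult_smult_assoc_mat[OF Adj A] adj_mat(3)[OF A] d unfolding C_def Adj_def c_def
    by (auto intro!: eq_matI)
  have \<Omega>C: "\<Omega> * C = c \<cdot>\<^sub>m (\<Omega> * Adj)" unfolding C_def by (rule mult_smult_distrib[OF \<Omega> Adj])
  have "C\<^sup>T * \<Omega> * C = C\<^sup>T * (\<Omega> * C)" using assoc_mult_mat[OF _ \<Omega> C, of "C\<^sup>T" m] C by simp
  also have "\<dots> = c \<cdot>\<^sub>m (c \<cdot>\<^sub>m (Adj\<^sup>T * (\<Omega> * Adj)))"
  proof -
    have "C\<^sup>T = c \<cdot>\<^sub>m Adj\<^sup>T" unfolding C_def by (auto intro!: eq_matI)
    then show ?thesis unfolding \<Omega>C using Adj \<Omega>
      by (simp add: mult_smult_assoc_mat[of "Adj\<^sup>T" m m _ m] mult_smult_distrib[of "Adj\<^sup>T" m m _ m])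
  qed
  finally show "phi m \<Lambda> \<Omega> = c\<^sup>2 \<cdot>\<^sub>m (Adj\<^sup>T * (\<Omega> * Adj))"
    unfolding phi by (auto intro!: eq_matI simp: power2_eq_square)
  show "(1\<^sub>m m - \<Lambda>)\<^sup>T * phi m \<Lambda> \<Omega> = c \<cdot>\<^sub>m (\<Omega> * Adj)"
    unfolding phi congruence_by_inverse[OF A C \<Omega> CA] \<Omega>C ..
qed

lemma det_cleared_matA:
  assumes \<theta>: "(\<Lambda>, \<Omega>) \<in> Theta m D B"
    and y: "\<And>i. i < n \<Longrightarrow> y i < m" and p: "\<And>j. j < n \<Longrightarrow> p j < m"
  shows "det (cleared_matA m D B v n y p (\<Lambda>, \<Omega>)) = det (1\<^sub>m m - \<Lambda>) ^ (2 * n) * det (matA m D B v n y p \<Lambda> \<Omega>)"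
    and "det (1\<^sub>m m - \<Lambda>) \<noteq> 0"
proof -
  have \<Lambda>: "\<Lambda> \<in> carrier_mat m m" and \<Omega>: "\<Omega> \<in> carrier_mat m m" and inv: "invertible_mat (1\<^sub>m m - \<Lambda>)"
    using \<theta> unfolding Theta_def by auto
  define d where "d = det (1\<^sub>m m - \<Lambda>)"
  define Adj where "Adj = adj_mat (1\<^sub>m m - \<Lambda>)"
  have Adj: "Adj \<in> carrier_mat m m" unfolding Adj_def using \<Lambda> by (intro adj_mat(1)) auto
  have "1\<^sub>m m - \<Lambda> \<in> carrier_mat m m" using \<Lambda> by auto
  then have d: "d \<noteq> 0" unfolding d_def using inv by (rule det_nonzero_if_invertible)
  then show "det (1\<^sub>m m - \<Lambda>) \<noteq> 0" unfolding d_def .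
  note phi = phi_via_adjugate[OF \<Lambda> \<Omega> d[unfolded d_def], folded d_def Adj_def]
  have IL: "I_minus_Lambda m (\<Lambda>, \<Omega>) = 1\<^sub>m m - \<Lambda>" and Om: "Omega m (\<Lambda>, \<Omega>) = \<Omega>"
    unfolding I_minus_Lambda_def Omega_def using \<Lambda> \<Omega> by (auto intro!: eq_matI)
  have "cleared_matA m D B v n y p (\<Lambda>, \<Omega>) = mat n n (\<lambda>(i, j). if y i \<in> htr m D B v
      then (d \<cdot>\<^sub>m (\<Omega> * Adj)) $$ (y i, p j) else (Adj\<^sup>T * (\<Omega> * Adj)) $$ (y i, p j))"
    unfolding cleared_matA_def Let_def IL Om d_def Adj_def ..
  also have "\<dots> = d\<^sup>2 \<cdot>\<^sub>m matA m D B v n y p \<Lambda> \<Omega>"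
    unfolding matA_def Let_def phi(1) phi(2)[unfolded phi(1)] using y p d Adj \<Omega>
    by (intro eq_matI) (auto simp: power2_eq_square)
  finally show "det (cleared_matA m D B v n y p (\<Lambda>, \<Omega>)) = det (1\<^sub>m m - \<Lambda>) ^ (2 * n) * det (matA m D B v n y p \<Lambda> \<Omega>)"
    unfolding d_def by (simp add: matA_def Let_def power_mult)
qed

lemma generically_nonzero_if_polynomial_multiple:
  assumes F: "poly_fun m F" and Fg: "\<And>\<theta>. \<theta> \<in> Theta m D B \<Longrightarrow> F \<theta> = 0 \<longleftrightarrow> g \<theta> = 0"
    and \<theta>0: "\<theta>0 \<in> Theta m D B" "g \<theta>0 \<noteq> 0"
  shows "\<exists>S. proper_algebraic_subset m D B S \<and> (\<forall>\<theta> \<in> Theta m D B - S. g \<theta> \<noteq> 0)"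
proof (intro exI conjI)
  let ?S = "{\<theta> \<in> Theta m D B. F \<theta> = 0}"
  show "proper_algebraic_subset m D B ?S"
  proof -
    have "F \<theta>0 \<noteq> 0" using Fg \<theta>0 by blast
    then show ?thesis
      unfolding proper_algebraic_subset_def using F \<theta>0 by (intro exI[of _ "{F}"]) auto
  qed
  show "\<forall>\<theta> \<in> Theta m D B - ?S. g \<theta> \<noteq> 0" using Fg by blast
qed

theorem mainTheorem13:
  fixes m n v :: nat and D B :: "(nat \<times> nat) set" and Y :: "nat set"
    and y p :: "nat \<Rightarrow> nat"
  assumes "mixed_graph m D B"
    and "v < m"
    and "Y \<subseteq> {0..<m} - ({v} \<union> sib B v)"
    and "card Y = n" and "card (pa D v) = n"
    and "bij_betw y {0..<n} Y" and "bij_betw p {0..<n} (pa D v)"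
    and "HTC D B v Y"
  shows "\<exists>S. proper_algebraic_subset m D B S \<and>
           (\<forall>\<theta> \<in> Theta m D B - S. det (matA m D B v n y p (fst \<theta>) (snd \<theta>)) \<noteq> 0)"
proof -
  note graph = assms(1)[unfolded mixed_graph_def] and y = assms(6) and p = assms(7)
  have Y: "Y \<subseteq> {0..<m}" using assms(3) by blast
  have yi: "y i < m" if "i < n" for i
  proof -
    have "y i \<in> Y" using bij_betwE[OF y] that by simp
    then show ?thesis using Y by auto
  qed
  have pj: "p j < m" if "j < n" for j
  proof -
    have "p j \<in> pa D v" using bij_betwE[OF p] that by simp
    then show ?thesis using graph by (auto simp: pa_def)
  qed
  obtain \<sigma> \<pi> where "half_trek_system D B Y (pa D v) \<sigma> \<pi>"
    and "\<And>\<sigma>' \<pi>'. half_trek_system D B Y (pa D v) \<sigma>' \<pi>' \<Longrightarrow> system_cost Y \<pi> \<le> system_cost Y \<pi>'"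
    using min_cost_half_trek_system_exists assms(8) unfolding HTC_def by metis
  then interpret trek_witness D B Y "pa D v" \<sigma> \<pi> m
    using Y graph finite_subset[OF Y] by unfold_locales auto
  show ?thesis
  proof (rule generically_nonzero_if_polynomial_multiple)
    show "poly_fun m (\<lambda>\<theta>. det (cleared_matA m D B v n y p \<theta>))"
      by (rule poly_fun_det_cleared_matA[OF yi pj])
    show "det (cleared_matA m D B v n y p \<theta>) = 0 \<longleftrightarrow> det (matA m D B v n y p (fst \<theta>) (snd \<theta>)) = 0"
      if "\<theta> \<in> Theta m D B" for \<theta>
      using det_cleared_matA[of "fst \<theta>" "snd \<theta>"] that yi pj by simp
    show "det (matA m D B v n y p (fst (Lambda0, Omega0)) (snd (Lambda0, Omega0))) \<noteq> 0"
      using witness_det[OF y p] by simp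
  qed (rule witness_in_Theta)
qed

end
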